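(* Let $$G(t)=\sum_{n=1}^{\infty}\exp\big(t-\pi n^2 e^{4t}\big)\big(16\pi^2 n^4 e^{8t}-24\pi n^2 e^{4t}\big),\qquad t\ge 0,$$ and for $z\in\mathbb{C}$ let $\eta(z)=\int_0^\infty G(t)\cosh(zt)\,dt$. Then for every real $y$ there exists $\varepsilon>0$ such that $\eta(x+iy)\neq 0$ for all real $x$ with $0<|x|<\varepsilon$.
   Context: The function $\eta$ satisfies $\eta(z)=\xi\big(\tfrac{z+1}{2}\big)$, where $\xi(s)=\tfrac12 s(s-1)\pi^{-s/2}\Gamma(s/2)\zeta(s)$ is Riemann's xi-function; the line $\operatorname{Re}z=0$ corresponds to the critical line $\operatorname{Re}s=1/2$. *)

theory Defs
  imports "HOL-Analysis.Analysis"
begin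

definition G :: "real \<Rightarrow> real" where
  "G t = (\<Sum>m. let n = real (Suc m) in
            exp (t - pi * n\<^sup>2 * exp (4 * t)) *
            (16 * pi\<^sup>2 * n ^ 4 * exp (8 * t) - 24 * pi * n\<^sup>2 * exp (4 * t)))"

definition eta :: "complex \<Rightarrow> complex" where
  "eta z = integral {0..} (\<lambda>t::real. complex_of_real (G t) * cosh (z * complex_of_real t))"

end

theory Submission
  imports Defs "HOL-Complex_Analysis.Complex_Analysis"
begin

text \<open>
  The n-th term of G(t) is e^t \<phi>(\<pi> n^2 e^(4t)) with \<phi>(x) = e^(-x) (16 x^2 - 24 x), which is
  positive for x \<ge> \<pi> and O(x^(-k)) for every k. Hence G is positive and decays on [0, \<infinity>) faster
  than every exponential, so the integrals of G(t) cosh(z t) over [0, N] are entire functions of z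
  converging locally uniformly to \<eta>. Thus \<eta> is entire and \<eta>(0) = \<integral> G > 0; being not identically
  zero, \<eta> has isolated zeros, so no zero lies in a punctured neighbourhood of iy.
\<close>

lemma power_le_exp_mult:
  fixes x :: real
  assumes "0 \<le> x" "0 < j"
  shows "x ^ j \<le> real j ^ j * exp x"
proof -
  have "(x / real j) ^ j \<le> (1 + x / real j) ^ j"
    using assms by (intro power_mono) auto
  also have "\<dots> \<le> exp x"
    using assms by (intro exp_ge_one_plus_x_over_n_power_n) auto
  finally show ?thesis
    using assms by (simp add: power_divide field_simps)
qed

lemma power2_mult_exp_neg_le:
  fixes x :: real
  assumes "0 < x"
  shows "x\<^sup>2 * exp (- x) \<le> real (k + 2) ^ (k + 2) / x ^ k"
proof -
  have "x ^ k * x\<^sup>2 \<le> real (k + 2) ^ (k + 2) * exp x"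
    using power_le_exp_mult[of x "k + 2"] assms by (simp add: power_add power2_eq_square mult_ac)
  then show ?thesis
    using assms by (simp add: exp_minus field_simps)
qed

definition G_term :: "nat \<Rightarrow> real \<Rightarrow> real" where
  "G_term m t = (let n = real (Suc m) in
     exp (t - pi * n\<^sup>2 * exp (4 * t)) *
     (16 * pi\<^sup>2 * n ^ 4 * exp (8 * t) - 24 * pi * n\<^sup>2 * exp (4 * t)))"

lemma G_eq_suminf: "G t = (\<Sum>m. G_term m t)"
  unfolding G_def G_term_def ..

lemma G_term_eq:
  assumes "x = pi * real (Suc m) ^ 2 * exp (4 * t)"
  shows "G_term m t = exp t * (exp (- x) * (16 * x\<^sup>2 - 24 * x))"
proof -
  have "exp (8 * t) = exp (4 * t) * exp (4 * t)" "exp (t - x) = exp t * exp (- x)"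
    by (simp_all flip: exp_add)
  then show ?thesis
    using assms unfolding G_term_def Let_def
    by (simp add: power2_eq_square power4_eq_xxxx algebra_simps)
qed

lemma pi_le_G_term_arg: "0 \<le> t \<Longrightarrow> pi \<le> pi * real (Suc m) ^ 2 * exp (4 * t)"
  using mult_mono[of 1 "real (Suc m) ^ 2" 1 "exp (4 * t)"] by simp

lemma G_term_pos:
  assumes "0 \<le> t"
  shows "0 < G_term m t"
proof -
  define x where "x = pi * real (Suc m) ^ 2 * exp (4 * t)"
  have "pi \<le> x"
    unfolding x_def using assms by (rule pi_le_G_term_arg)
  then have "24 * x < 16 * x * x"
    using pi_gt3 by (intro mult_strict_right_mono) auto
  then show ?thesis
    unfolding G_term_eq[OF x_def] by (simp add: power2_eq_square)
qed

lemma G_term_le: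
  assumes t: "0 \<le> t" and k: "1 \<le> k"
  shows "G_term m t \<le> 16 * real (k + 2) ^ (k + 2) * exp ((1 - 4 * real k) * t) / real (Suc m) ^ 2"
proof -
  define n where "n = real (Suc m)"
  define x where "x = pi * n\<^sup>2 * exp (4 * t)"
  have n: "1 \<le> n"
    by (simp add: n_def)
  have x: "0 < x"
    using pi_le_G_term_arg[OF t, of m] pi_gt3 by (simp add: x_def n_def)
  have "x ^ k = pi ^ k * (n\<^sup>2) ^ k * exp (4 * real k * t)"
    by (simp add: x_def power_mult_distrib mult_ac flip: exp_of_nat_mult)
  moreover have "1 \<le> pi ^ k"
    using pi_gt3 by (simp add: one_le_power)
  moreover have "n\<^sup>2 \<le> (n\<^sup>2) ^ k"
    using n k power_increasing[of 1 k "n\<^sup>2"] by simp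
  ultimately have "n\<^sup>2 * exp (4 * real k * t) \<le> x ^ k"
    using mult_mono[of 1 "pi ^ k" "n\<^sup>2" "(n\<^sup>2) ^ k"] by simp
  then have decay:
      "real (k + 2) ^ (k + 2) / x ^ k \<le> real (k + 2) ^ (k + 2) / (n\<^sup>2 * exp (4 * real k * t))"
    using n x by (intro divide_left_mono) auto
  have "16 * x\<^sup>2 - 24 * x \<le> 16 * x\<^sup>2"
    using x by simp
  then have "G_term m t \<le> exp t * (16 * (x\<^sup>2 * exp (- x)))"
    unfolding G_term_eq[OF x_def[unfolded n_def]] by (simp add: mult_ac)
  also have "\<dots> \<le> exp t * (16 * (real (k + 2) ^ (k + 2) / (n\<^sup>2 * exp (4 * real k * t))))"
    using power2_mult_exp_neg_le[OF x, of k] decay by (intro mult_left_mono) auto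
  also have "\<dots> = 16 * real (k + 2) ^ (k + 2) * (exp t / exp (4 * real k * t)) / n\<^sup>2"
    by (simp add: mult_ac)
  also have "exp t / exp (4 * real k * t) = exp ((1 - 4 * real k) * t)"
    by (simp add: left_diff_distrib flip: exp_diff)
  finally show ?thesis
    by (simp add: n_def)
qed

lemma summable_const_div_Suc_power2: "summable (\<lambda>m. c / real (Suc m) ^ 2)"
proof -
  have "summable (\<lambda>m. inverse (real m ^ 2))"
    by (rule inverse_power_summable) auto
  then have "summable (\<lambda>m. inverse (real (Suc m) ^ 2))"
    by (subst summable_Suc_iff)
  then show ?thesis
    using summable_mult[of _ c] by (simp add: divide_inverse)
qed

lemma norm_G_term_le:
  assumes "0 \<le> t"
  shows "norm (G_term m t) \<le> 432 / real (Suc m) ^ 2"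
proof -
  have "G_term m t \<le> 432 * exp (- 3 * t) / real (Suc m) ^ 2"
    using G_term_le[OF assms, of 1] by simp
  also have "\<dots> \<le> 432 / real (Suc m) ^ 2"
    using assms by (intro divide_right_mono) auto
  finally show ?thesis
    using G_term_pos[OF assms, of m] by simp
qed

lemma summable_G_term: "0 \<le> t \<Longrightarrow> summable (\<lambda>m. G_term m t)"
  using summable_comparison_test'[OF summable_const_div_Suc_power2 norm_G_term_le] .

lemma G_pos: "0 \<le> t \<Longrightarrow> 0 < G t"
  unfolding G_eq_suminf by (intro suminf_pos summable_G_term G_term_pos)

lemma G_decays_faster_than_exp: "\<exists>C. \<forall>t\<ge>0. G t \<le> C * exp (- a * t)"
proof -
  define k where "k = nat \<lceil>a\<rceil> + 1"
  define c where "c = 16 * real (k + 2) ^ (k + 2)"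
  have k: "1 \<le> k" "a \<le> 4 * real k - 1"
    using real_nat_ceiling_ge[of a] unfolding k_def by auto
  have "G t \<le> (\<Sum>m. c / real (Suc m) ^ 2) * exp (- a * t)" if t: "0 \<le> t" for t
  proof -
    have "G t \<le> (\<Sum>m. c / real (Suc m) ^ 2 * exp (- a * t))"
      unfolding G_eq_suminf
    proof (rule suminf_le)
      fix m
      have "(1 - 4 * real k) * t \<le> - a * t"
        using k t by (intro mult_right_mono) auto
      then have "exp ((1 - 4 * real k) * t) \<le> exp (- a * t)"
        by simp
      moreover have "G_term m t \<le> c / real (Suc m) ^ 2 * exp ((1 - 4 * real k) * t)"
        using G_term_le[OF t k(1), of m] by (simp add: c_def)
      ultimately show "G_term m t \<le> c / real (Suc m) ^ 2 * exp (- a * t)"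
        using mult_left_mono[of _ _ "c / real (Suc m) ^ 2"] by (fastforce simp: c_def)
    qed (use t summable_G_term summable_mult2 summable_const_div_Suc_power2 in auto)
    also have "\<dots> = (\<Sum>m. c / real (Suc m) ^ 2) * exp (- a * t)"
      by (rule suminf_mult2[symmetric, OF summable_const_div_Suc_power2])
    finally show ?thesis .
  qed
  then show ?thesis by blast
qed

lemma continuous_on_G: "continuous_on {0..} G"
proof -
  have "uniform_limit {0..} (\<lambda>n t. \<Sum>m<n. G_term m t) (\<lambda>t. \<Sum>m. G_term m t) sequentially"
    by (rule Weierstrass_m_test[OF _ summable_const_div_Suc_power2]) (use norm_G_term_le in auto)
  moreover have "continuous_on {0..} (\<lambda>t. \<Sum>m<n. G_term m t)" for n
    unfolding G_term_def Let_def by (intro continuous_intros)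
  ultimately show ?thesis
    unfolding G_eq_suminf[abs_def]
    by (intro uniform_limit_theorem[OF always_eventually] trivial_limit_sequentially) auto
qed

lemma norm_cosh_le_exp_norm: "norm (cosh (w :: complex)) \<le> exp (norm w)"
proof -
  have "norm (cosh w) \<le> (norm (exp w) + norm (exp (- w))) / 2"
    unfolding cosh_field_def using norm_triangle_ineq[of "exp w" "exp (- w)"] by simp
  also have "\<dots> = (exp (Re w) + exp (- Re w)) / 2"
    by (simp add: norm_exp_eq_Re)
  also have "\<dots> \<le> exp (norm w)"
    using abs_Re_le_cmod[of w] add_mono[of "exp (Re w)" "exp (norm w)" "exp (- Re w)" "exp (norm w)"]
    by (simp add: abs_le_iff)
  finally show ?thesis .
qed

lemma exp_bounded_integrable_on_atLeast:
  fixes f :: "real \<Rightarrow> 'a::euclidean_space"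
  assumes cont: "continuous_on {c..} f"
    and bound: "\<And>t. c \<le> t \<Longrightarrow> norm (f t) \<le> C * exp (- t)"
  shows "f integrable_on {c..}" and "norm (integral {c..} f) \<le> C * exp (- c)"
proof -
  have exp_int: "((\<lambda>t. C * exp (- 1 * t)) has_integral C * (exp (- 1 * c) / 1)) {c..}"
    by (intro has_integral_mult_right has_integral_exp_minus_to_infinity) auto
  have meas: "f \<in> borel_measurable (lebesgue_on {c..})"
    using cont by (rule continuous_imp_measurable_on_sets_lebesgue) auto
  have bound': "\<And>t. t \<in> {c..} \<Longrightarrow> norm (f t) \<le> C * exp (- 1 * t)"
    using bound by simp
  show "f integrable_on {c..}"
    using measurable_bounded_by_integrable_imp_integrable[OF meas _ bound'] exp_int by auto
  show "norm (integral {c..} f) \<le> C * exp (- c)"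
    using integral_norm_bound_integral'[OF bound' meas _ exp_int] by simp
qed

lemma integral_atLeast_split:
  fixes f :: "real \<Rightarrow> 'a::banach"
  assumes "a \<le> b" "f integrable_on {a..b}" "f integrable_on {b..}"
  shows "integral {a..} f = integral {a..b} f + integral {b..} f"
proof -
  have "{a..b} \<inter> {b..} = {b}" "{a..b} \<union> {b..} = {a..}"
    using assms(1) by auto
  then have "(f has_integral integral {a..b} f + integral {b..} f) {a..}"
    using has_integral_Un[OF integrable_integral[OF assms(2)] integrable_integral[OF assms(3)]] by simp
  then show ?thesis
    by (rule integral_unique)
qed

definition eta_integrand :: "complex \<Rightarrow> real \<Rightarrow> complex" where
  "eta_integrand z t = complex_of_real (G t) * cosh (z * complex_of_real t)"

lemma eta_eq_integral: "eta z = integral {0..} (eta_integrand z)"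
  unfolding eta_def eta_integrand_def ..

lemma continuous_on_eta_integrand: "continuous_on {0..} (eta_integrand z)"
  unfolding eta_integrand_def by (intro continuous_intros continuous_on_G)

lemma eta_integrand_exp_bound:
  "\<exists>C. \<forall>z t. norm z \<le> R \<longrightarrow> 0 \<le> t \<longrightarrow> norm (eta_integrand z t) \<le> C * exp (- t)"
proof -
  obtain C where C: "\<And>t. 0 \<le> t \<Longrightarrow> G t \<le> C * exp (- (R + 1) * t)"
    using G_decays_faster_than_exp by blast
  have "norm (eta_integrand z t) \<le> C * exp (- t)" if z: "norm z \<le> R" and t: "0 \<le> t" for z t
  proof -
    have "norm (z * complex_of_real t) \<le> R * t"
      using mult_right_mono[OF z t] by (simp add: norm_mult t)
    then have "norm (cosh (z * complex_of_real t)) \<le> exp (R * t)"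
      using norm_cosh_le_exp_norm order_trans exp_le_cancel_iff by meson
    then have "norm (eta_integrand z t) \<le> G t * exp (R * t)"
      using G_pos[OF t] unfolding eta_integrand_def by (simp add: norm_mult)
    also have "\<dots> \<le> C * exp (- (R + 1) * t) * exp (R * t)"
      using C[OF t] by simp
    also have "\<dots> = C * exp (- t)"
      by (simp add: algebra_simps flip: exp_add)
    finally show ?thesis .
  qed
  then show ?thesis by blast
qed

lemma eta_truncation_error:
  "\<exists>C. \<forall>z N. norm z \<le> R \<longrightarrow> 0 \<le> N \<longrightarrow>
     dist (integral {0..N} (eta_integrand z)) (eta z) \<le> C * exp (- N)"
proof -
  obtain C
    where C: "\<And>z t. norm z \<le> R \<Longrightarrow> 0 \<le> t \<Longrightarrow> norm (eta_integrand z t) \<le> C * exp (- t)"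
    using eta_integrand_exp_bound by blast
  have "dist (integral {0..N} (eta_integrand z)) (eta z) \<le> C * exp (- N)"
    if z: "norm z \<le> R" and N: "0 \<le> N" for z N
  proof -
    have bound: "\<And>t. N \<le> t \<Longrightarrow> norm (eta_integrand z t) \<le> C * exp (- t)"
      using C z N by auto
    have cont: "continuous_on {N..} (eta_integrand z)"
      using N by (intro continuous_on_subset[OF continuous_on_eta_integrand]) auto
    have "eta z = integral {0..N} (eta_integrand z) + integral {N..} (eta_integrand z)"
      unfolding eta_eq_integral
      by (intro integral_atLeast_split integrable_continuous_interval N
          continuous_on_subset[OF continuous_on_eta_integrand]
          exp_bounded_integrable_on_atLeast(1)[OF cont bound]) auto
    then have "dist (integral {0..N} (eta_integrand z)) (eta z) = norm (integral {N..} (eta_integrand z))"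
      by (simp add: dist_norm)
    also have "\<dots> \<le> C * exp (- N)"
      by (rule exp_bounded_integrable_on_atLeast(2)[OF cont bound])
    finally show ?thesis .
  qed
  then show ?thesis by blast
qed

lemma eta_uniform_limit:
  "uniform_limit (cball 0 R) (\<lambda>n z. integral {0..real n} (eta_integrand z)) eta sequentially"
proof (rule uniform_limitI)
  fix e :: real
  assume "0 < e"
  obtain C where C: "\<And>z N. norm z \<le> R \<Longrightarrow> 0 \<le> N \<Longrightarrow>
      dist (integral {0..N} (eta_integrand z)) (eta z) \<le> C * exp (- N)"
    using eta_truncation_error by blast
  have "(\<lambda>n. C * exp (- 1) ^ n) \<longlonglongrightarrow> C * 0"
    by (intro tendsto_mult tendsto_const LIMSEQ_realpow_zero) auto
  then have "\<forall>\<^sub>F n in sequentially. C * exp (- real n) < e"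
    using \<open>0 < e\<close> by (simp add: order_tendstoD(2) flip: exp_of_nat_mult)
  then show "\<forall>\<^sub>F n in sequentially. \<forall>z\<in>cball 0 R.
      dist (integral {0..real n} (eta_integrand z)) (eta z) < e"
    by eventually_elim (auto intro!: le_less_trans[OF C])
qed

lemma holomorphic_on_integral_eta_integrand:
  "(\<lambda>z. integral {0..b} (eta_integrand z)) holomorphic_on UNIV"
proof -
  define dz where
    "dz z t = complex_of_real (G t) * (sinh (z * complex_of_real t) * complex_of_real t)" for z t
  have "((\<lambda>z. eta_integrand z t) has_field_derivative dz z t) (at z within UNIV)" for z t
    unfolding eta_integrand_def dz_def by (auto intro!: derivative_eq_intros)
  moreover have "eta_integrand z integrable_on cbox 0 b" for z
    unfolding box_real
    by (intro integrable_continuous_interval continuous_on_subset[OF continuous_on_eta_integrand]) auto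
  moreover have "continuous_on (UNIV \<times> cbox 0 b) (\<lambda>(z, t). dz z t)"
  proof -
    have "continuous_on (UNIV \<times> cbox 0 b) (\<lambda>p. G (snd p))"
      by (rule continuous_on_compose2[OF continuous_on_G continuous_on_snd]) (auto simp: box_real)
    then show ?thesis
      unfolding dz_def case_prod_beta' by (intro continuous_intros)
  qed
  ultimately have "(\<lambda>z. integral (cbox 0 b) (eta_integrand z)) holomorphic_on UNIV"
    by (intro leibniz_rule_holomorphic[where fx = dz]) auto
  then show ?thesis
    by simp
qed

lemma eta_holomorphic: "eta holomorphic_on UNIV"
proof -
  have "eta holomorphic_on ball 0 R" for R
  proof -
    have "\<forall>\<^sub>F n in sequentially. continuous_on (cball 0 R) (\<lambda>z. integral {0..real n} (eta_integrand z))
        \<and> (\<lambda>z. integral {0..real n} (eta_integrand z)) holomorphic_on ball 0 R"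
      using holomorphic_on_integral_eta_integrand
      by (intro always_eventually allI conjI holomorphic_on_imp_continuous_on)
         (auto intro: holomorphic_on_subset)
    from holomorphic_uniform_limit[OF this eta_uniform_limit trivial_limit_sequentially]
    show ?thesis by blast
  qed
  then have "eta field_differentiable at w" for w
    by (rule holomorphic_on_imp_differentiable_at[of _ "ball 0 (norm w + 1)"]) auto
  then show ?thesis
    by (simp add: holomorphic_on_def field_differentiable_at_within)
qed

lemma has_integral_atLeast_pos:
  fixes f :: "real \<Rightarrow> real"
  assumes int: "(f has_integral I) {a..}" and cont: "continuous_on {a..} f"
    and pos: "\<And>t. a \<le> t \<Longrightarrow> 0 < f t"
  shows "0 < I"
proof -
  have cont': "continuous_on {a..a + 1} f"
    by (rule continuous_on_subset[OF cont]) auto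
  obtain s where s: "s \<in> {a..a + 1}" "\<And>t. t \<in> {a..a + 1} \<Longrightarrow> f s \<le> f t"
    using continuous_attains_inf[OF compact_Icc _ cont'] by auto
  have "0 < f s"
    using s(1) pos by auto
  also have "f s = integral {a..a + 1} (\<lambda>_. f s)"
    by simp
  also have "\<dots> \<le> integral {a..a + 1} f"
    using s(2) by (intro integral_le integrable_continuous_interval cont') auto
  also have "\<dots> \<le> integral {a..} f"
    using int pos by (intro integral_subset_le integrable_continuous_interval cont')
      (auto intro: less_imp_le)
  also have "\<dots> = I"
    using int by (rule integral_unique)
  finally show ?thesis .
qed

lemma eta_0_neq_0: "eta 0 \<noteq> 0"
proof -
  obtain C where C: "\<And>t. 0 \<le> t \<Longrightarrow> norm (eta_integrand 0 t) \<le> C * exp (- t)"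
    using eta_integrand_exp_bound[of 0] by auto
  have "(eta_integrand 0 has_integral eta 0) {0..}"
    unfolding eta_eq_integral
    by (rule integrable_integral[OF exp_bounded_integrable_on_atLeast(1)[OF continuous_on_eta_integrand C]])
  then have "((Re \<circ> eta_integrand 0) has_integral Re (eta 0)) {0..}"
    by (rule has_integral_linear[OF _ bounded_linear_Re])
  moreover have "Re \<circ> eta_integrand 0 = G"
    by (simp add: eta_integrand_def fun_eq_iff)
  ultimately have "(G has_integral Re (eta 0)) {0..}"
    by simp
  then have "0 < Re (eta 0)"
    using continuous_on_G G_pos by (rule has_integral_atLeast_pos)
  then show ?thesis
    by auto
qed

theorem theorem2:
  fixes y :: real
  shows "\<exists>\<epsilon>>0. \<forall>x::real. 0 < \<bar>x\<bar> \<and> \<bar>x\<bar> < \<epsilon> \<longrightarrow> eta (Complex x y) \<noteq> 0"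
proof -
  have "\<forall>\<^sub>F w in at (Complex 0 y). eta w \<noteq> 0 \<and> w \<in> UNIV"
    by (rule non_zero_neighbour_alt[OF eta_holomorphic open_UNIV connected_UNIV UNIV_I UNIV_I eta_0_neq_0])
  then obtain \<epsilon> where "\<epsilon> > 0"
    and \<epsilon>: "\<And>w. w \<noteq> Complex 0 y \<Longrightarrow> dist w (Complex 0 y) < \<epsilon> \<Longrightarrow> eta w \<noteq> 0"
    unfolding eventually_at by auto
  have "Complex x y - Complex 0 y = complex_of_real x" for x
    by (simp add: complex_eq_iff)
  then have "dist (Complex x y) (Complex 0 y) = \<bar>x\<bar>" for x
    by (simp add: dist_norm)
  then show ?thesis
    using \<epsilon> \<open>\<epsilon> > 0\<close> by (metis abs_0 complex.inject order_less_irrefl)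
qed

end
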